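(* Let $b>0$ and let $h,k\in\mathbb{R}$ satisfy $k\geqslant 4bh-b^2$ and $k\geqslant 2b$. Along any solution of the equations of motion lying on the common level set $\{H=h,\ K=k\}\subset\mathcal{P}^4$ (with $r_3\neq0$), the separation variables $x(t),y(t)$ satisfy, for appropriate branches of the square roots, $$(x-y)\frac{dx}{dt}=-\frac{1}{\sqrt b}\sqrt{-W(x)},\qquad (x-y)\frac{dy}{dt}=\frac{1}{\sqrt b}\sqrt{-W(y)},$$ where $$W(s)=(s^2-k-2b)(s^2-k+2b)(s^2-2bs+4bh-k).$$ Equivalently, $\dfrac{dx}{\sqrt{-W(x)}}+\dfrac{dy}{\sqrt{-W(y)}}=0$ and $\dfrac{x\,dx}{\sqrt{-W(x)}}+\dfrac{y\,dy}{\sqrt{-W(y)}}=-\dfrac{dt}{\sqrt b}$.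
   Context: Goryachev's integrable case of rigid body dynamics (with the normalization $c=1$). On $\mathbb{R}^6$ with coordinates $\mathbf{s}=(s_1,s_2,s_3)$, $\mathbf{r}=(r_1,r_2,r_3)$, take the Poisson brackets $\{s_i,s_j\}=-\varepsilon_{ijk}s_k$, $\{s_i,r_j\}=-\varepsilon_{ijk}r_k$, $\{r_i,r_j\}=0$, and the Hamiltonian $$H=\tfrac12(s_1^2+s_2^2+2s_3^2)+\tfrac12\Big[(r_1^2-r_2^2)+\frac{b}{r_3^2}\Big],$$ $b$ a real parameter. The equations of motion are $\dot s_1=s_2s_3+r_2r_3-b\,r_2/r_3^3$, $\dot s_2=-s_1s_3+r_1r_3+b\,r_1/r_3^2$, $\dot s_3=-2r_1r_2$, $\dot r_1=2s_3r_2-s_2r_3$, $\dot r_2=-2s_3r_1+s_1r_3$, $\dot r_3=s_2r_1-s_1r_2$. The Casimir functions are $\Gamma=r_1^2+r_2^2+r_3^2$, $L=s_1r_1+s_2r_2+s_3r_3$, and $\mathcal{P}^4=\{(\mathbf{s},\mathbf{r}):\Gamma=1,\ L=0\}$. The additional first integral on $\mathcal{P}^4$ is $$K=\Big(s_1^2+s_2^2+\frac{b}{r_3^2}\Big)^2+2r_3^2(s_1^2-s_2^2)+r_3^4.$$ Separation variables: put $z=r_3^2$, $u=s_1^2+s_2^2+b/r_3^2$; then $x,y$ are the two roots of $s^2-\frac{2b}{z}s+\left(\frac{2bu}{z}-k\right)=0$, so that $z=\frac{2b}{x+y}$, $u=\frac{xy+k}{x+y}$. *)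

theory Defs
  imports Complex_Main
begin

text \<open>Goryachev's case, normalization c = 1.\<close>

definition goryachev_H :: "real \<Rightarrow> real \<Rightarrow> real \<Rightarrow> real \<Rightarrow> real \<Rightarrow> real \<Rightarrow> real \<Rightarrow> real" where
  "goryachev_H b s1 s2 s3 r1 r2 r3 =
     (s1^2 + s2^2 + 2 * s3^2) / 2 + ((r1^2 - r2^2) + b / r3^2) / 2"

definition goryachev_K :: "real \<Rightarrow> real \<Rightarrow> real \<Rightarrow> real \<Rightarrow> real \<Rightarrow> real \<Rightarrow> real \<Rightarrow> real" where
  "goryachev_K b s1 s2 s3 r1 r2 r3 =
     (s1^2 + s2^2 + b / r3^2)^2 + 2 * r3^2 * (s1^2 - s2^2) + r3^4"

definition casimir_Gamma :: "real \<Rightarrow> real \<Rightarrow> real \<Rightarrow> real" where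
  "casimir_Gamma r1 r2 r3 = r1^2 + r2^2 + r3^2"

definition casimir_L :: "real \<Rightarrow> real \<Rightarrow> real \<Rightarrow> real \<Rightarrow> real \<Rightarrow> real \<Rightarrow> real" where
  "casimir_L s1 s2 s3 r1 r2 r3 = s1 * r1 + s2 * r2 + s3 * r3"

definition goryachev_W :: "real \<Rightarrow> real \<Rightarrow> real \<Rightarrow> real \<Rightarrow> real" where
  "goryachev_W b h k s = (s^2 - k - 2*b) * (s^2 - k + 2*b) * (s^2 - 2*b*s + 4*b*h - k)"

definition separation_pair :: "real \<Rightarrow> real \<Rightarrow> real \<Rightarrow> real \<Rightarrow> real \<Rightarrow> real \<Rightarrow> real \<Rightarrow> bool" where
  "separation_pair b k s1 s2 r3 x y \<longleftrightarrow>
     (let z = r3^2; u = s1^2 + s2^2 + b / r3^2 in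
        x + y = 2 * b / z \<and> x * y = 2 * b * u / z - k)"

end

theory Submission imports Defs begin

text \<open>The separation relations x + y = 2b/r3^2 and x y = 2bu/r3^2 - k express the symmetric
  functions of x, y through the phase variables, so the equations of motion give (x + y)' and
  (x y)' explicitly. Since (x - y) x' = x (x + y)' - (x y)', the velocity (x - y) x' is an
  explicit function of x and the phase point, and on the level set H = h, K = k of P^4 its
  square times b is -W(x); likewise for y. Choosing the sign of the square root at each
  instant gives the claim.\<close>

definition separation_sum_rate :: "real \<Rightarrow> real \<Rightarrow> real \<Rightarrow> real \<Rightarrow> real \<Rightarrow> real \<Rightarrow> real" where
  "separation_sum_rate b s1 s2 r1 r2 r3 = -4*b*(s2*r1 - s1*r2)/r3^3"

definition separation_product_rate :: "real \<Rightarrow> real \<Rightarrow> real \<Rightarrow> real \<Rightarrow> real \<Rightarrow> real \<Rightarrow> real" where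
  "separation_product_rate b s1 s2 r1 r2 r3 =
     4*b*(s1*r2 + s2*r1)/r3 - 4*b*(s1^2 + s2^2 + b/r3^2)*(s2*r1 - s1*r2)/r3^3"

lemma has_real_derivative_separation_sum:
  fixes s1 s2 r1 r2 r3 :: "real \<Rightarrow> real"
  assumes "(r3 has_real_derivative (s2 t * r1 t - s1 t * r2 t)) (at t)" and "r3 t \<noteq> 0"
  shows "((\<lambda>t. 2*b/r3 t^2) has_real_derivative
           separation_sum_rate b (s1 t) (s2 t) (r1 t) (r2 t) (r3 t)) (at t)"
  using assms unfolding separation_sum_rate_def
  by (auto intro!: derivative_eq_intros simp: field_simps power2_eq_square power3_eq_cube)

lemma has_real_derivative_separation_product:
  fixes s1 s2 s3 r1 r2 r3 :: "real \<Rightarrow> real"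
  assumes "(s1 has_real_derivative (s2 t * s3 t + r2 t * r3 t - b * r2 t / r3 t ^ 3)) (at t)"
    and "(s2 has_real_derivative (- s1 t * s3 t + r1 t * r3 t + b * r1 t / r3 t ^ 3)) (at t)"
    and "(r3 has_real_derivative (s2 t * r1 t - s1 t * r2 t)) (at t)"
    and "r3 t \<noteq> 0"
  shows "((\<lambda>t. 2*b*(s1 t^2 + s2 t^2 + b/r3 t^2)/r3 t^2 - k) has_real_derivative
           separation_product_rate b (s1 t) (s2 t) (r1 t) (r2 t) (r3 t)) (at t)"
  using assms unfolding separation_product_rate_def
  by (auto intro!: derivative_eq_intros
           simp: field_simps power2_eq_square power3_eq_cube power4_eq_xxxx)

lemma DERIV_unique_on_open:
  assumes "open I" and "t \<in> I" and "\<And>s. s \<in> I \<Longrightarrow> f s = g s"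
    and "(f has_real_derivative F) (at t)" and "(g has_real_derivative G) (at t)"
  shows "F = G"
proof -
  have "(g has_real_derivative F) (at t)"
    using has_field_derivative_transform_within_open[OF assms(4,1,2)] assms(3) by blast
  then show ?thesis using assms(5) by (rule DERIV_unique)
qed

text \<open>In the variable n = (w - u)/q^2 of a separation root w, the first hypothesis is the
  separation equation combined with K = k, and the last factor of the conclusion is
  n - w + 2h.\<close>

lemma separation_polynomial_identity:
  fixes n s1 s2 s3 r1 r2 q :: real
  assumes "n^2*q^2 + 2*(s1^2 + s2^2)*n - 2*(s1^2 - s2^2) - q^2 = 0"
    and "r1^2 + r2^2 + q^2 = 1" and "s1*r1 + s2*r2 + s3*q = 0"
  shows "2*((s1*r2 + s2*r1) + (s2*r1 - s1*r2)*n)^2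
           + (n^2 - 1)*q^2*(n*(1 - q^2) + 2*s3^2 + r1^2 - r2^2) = 0"
  using assms by algebra

lemma goryachev_W_at_separation_root:
  fixes b s1 s2 s3 r1 r2 q w :: real
  assumes q: "q \<noteq> 0" and \<Gamma>: "r1^2 + r2^2 + q^2 = 1" and L: "s1*r1 + s2*r2 + s3*q = 0"
    and H: "goryachev_H b s1 s2 s3 r1 r2 q = h" and K: "goryachev_K b s1 s2 s3 r1 r2 q = k"
    and root: "w^2 - (2*b/q^2)*w + (2*b*(s1^2 + s2^2 + b/q^2)/q^2 - k) = 0"
  shows "b*(w * separation_sum_rate b s1 s2 r1 r2 q - separation_product_rate b s1 s2 r1 r2 q)^2
           = - goryachev_W b h k w"
proof -
  define u where "u = s1^2 + s2^2 + b/q^2"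
  define n where "n = (w - u)/q^2"
  define E where "E = n*(1 - q^2) + 2*s3^2 + r1^2 - r2^2"
  have w: "w = u + n*q^2" using q by (simp add: n_def)
  have "w^2 - (2*b/q^2)*w + (2*b*u/q^2 - k) = w^2 - 2*b*n - k"
    using q by (simp add: n_def field_simps)
  then have k: "k = w^2 - 2*b*n" using root by (simp add: u_def)
  have k': "k = u^2 + 2*q^2*(s1^2 - s2^2) + q^4"
    using K by (simp add: goryachev_K_def u_def)
  have h: "2*h = u + 2*s3^2 + r1^2 - r2^2"
    using H unfolding goryachev_H_def u_def
    by (simp add: algebra_simps add_divide_distrib diff_divide_distrib)
  have "q^2*(n^2*q^2 + 2*(s1^2 + s2^2)*n - 2*(s1^2 - s2^2) - q^2) = 0"
  proof -
    have "q^2*(n^2*q^2 + 2*(s1^2 + s2^2)*n - 2*(s1^2 - s2^2) - q^2) = w^2 - 2*b*n - k"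
      unfolding k' w u_def using q by (simp add: field_simps power2_eq_square power4_eq_xxxx)
    then show ?thesis using k by simp
  qed
  then have "n^2*q^2 + 2*(s1^2 + s2^2)*n - 2*(s1^2 - s2^2) - q^2 = 0" using q by simp
  then have poly: "2*((s1*r2 + s2*r1) + (s2*r1 - s1*r2)*n)^2 = - ((n^2 - 1)*q^2*E)"
    using separation_polynomial_identity[OF _ \<Gamma> L] unfolding E_def by fastforce
  have "n - w + 2*h = E"
    unfolding E_def w h by (simp add: algebra_simps)
  moreover have "goryachev_W b h k w = 8*b^3*(n^2 - 1)*(n - w + 2*h)"
    unfolding goryachev_W_def k by (simp add: algebra_simps power2_eq_square power3_eq_cube)
  ultimately have W: "goryachev_W b h k w = 8*b^3*(n^2 - 1)*E" by simp
  have rate: "w * separation_sum_rate b s1 s2 r1 r2 q - separation_product_rate b s1 s2 r1 r2 q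
                = -4*b/q*((s1*r2 + s2*r1) + (s2*r1 - s1*r2)*n)"
    unfolding separation_sum_rate_def separation_product_rate_def w u_def[symmetric] using q
    by (simp add: field_simps power2_eq_square power3_eq_cube)
  have "b*(-4*b/q*((s1*r2 + s2*r1) + (s2*r1 - s1*r2)*n))^2
          = 8*b^3/q^2 * (2*((s1*r2 + s2*r1) + (s2*r1 - s1*r2)*n)^2)"
    using q by (simp add: field_simps power2_eq_square power3_eq_cube)
  also have "\<dots> = - goryachev_W b h k w"
    unfolding poly W using q by (simp add: field_simps power2_eq_square)
  finally show ?thesis unfolding rate .
qed

lemma separation_pair_root:
  assumes "separation_pair b k s1 s2 q x y" and "w = x \<or> w = y"
  shows "w^2 - (2*b/q^2)*w + (2*b*(s1^2 + s2^2 + b/q^2)/q^2 - k) = 0"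
proof -
  have "w^2 - (x + y)*w + x*y = 0"
    using assms(2) by (auto simp: power2_eq_square algebra_simps)
  then show ?thesis using assms(1) by (simp add: separation_pair_def Let_def)
qed

lemma separation_velocity_squares:
  fixes b s1 s2 s3 r1 r2 q x y dx dy :: real
  assumes q: "q \<noteq> 0" and \<Gamma>: "r1^2 + r2^2 + q^2 = 1" and L: "s1*r1 + s2*r2 + s3*q = 0"
    and H: "goryachev_H b s1 s2 s3 r1 r2 q = h" and K: "goryachev_K b s1 s2 s3 r1 r2 q = k"
    and sep: "separation_pair b k s1 s2 q x y"
    and sum_rate: "dx + dy = separation_sum_rate b s1 s2 r1 r2 q"
    and product_rate: "x*dy + dx*y = separation_product_rate b s1 s2 r1 r2 q"
  shows "b*((x - y)*dx)^2 = - goryachev_W b h k x"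
    and "b*((x - y)*dy)^2 = - goryachev_W b h k y"
proof -
  let ?S = "separation_sum_rate b s1 s2 r1 r2 q" and ?P = "separation_product_rate b s1 s2 r1 r2 q"
  have W: "b*(w*?S - ?P)^2 = - goryachev_W b h k w" if "w = x \<or> w = y" for w
    using goryachev_W_at_separation_root[OF q \<Gamma> L H K separation_pair_root[OF sep that]] .
  have "(x - y)*dx = x*?S - ?P" and "(x - y)*dy = - (y*?S - ?P)"
    unfolding sum_rate[symmetric] product_rate[symmetric] by (simp_all add: algebra_simps)
  then show "b*((x - y)*dx)^2 = - goryachev_W b h k x"
    and "b*((x - y)*dy)^2 = - goryachev_W b h k y"
    by (simp_all only: power2_minus W[OF disjI1[OF refl]] W[OF disjI2[OF refl]])
qed

lemma separation_rates_along_flow: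
  fixes s1 s2 s3 r1 r2 r3 x y :: "real \<Rightarrow> real"
  assumes "open I" and t: "t \<in> I"
    and sep: "\<forall>s\<in>I. separation_pair b k (s1 s) (s2 s) (r3 s) (x s) (y s)"
    and x': "(x has_real_derivative dx) (at t)" and y': "(y has_real_derivative dy) (at t)"
    and s1': "(s1 has_real_derivative (s2 t * s3 t + r2 t * r3 t - b * r2 t / r3 t ^ 3)) (at t)"
    and s2': "(s2 has_real_derivative (- s1 t * s3 t + r1 t * r3 t + b * r1 t / r3 t ^ 3)) (at t)"
    and r3': "(r3 has_real_derivative (s2 t * r1 t - s1 t * r2 t)) (at t)"
    and "r3 t \<noteq> 0"
  shows "dx + dy = separation_sum_rate b (s1 t) (s2 t) (r1 t) (r2 t) (r3 t)"
    and "x t * dy + dx * y t = separation_product_rate b (s1 t) (s2 t) (r1 t) (r2 t) (r3 t)"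
proof -
  have sum: "x s + y s = 2*b/r3 s^2"
   and prod: "x s * y s = 2*b*(s1 s^2 + s2 s^2 + b/r3 s^2)/r3 s^2 - k" if "s \<in> I" for s
    using sep that unfolding separation_pair_def Let_def by auto
  show "dx + dy = separation_sum_rate b (s1 t) (s2 t) (r1 t) (r2 t) (r3 t)"
  proof (rule DERIV_unique_on_open[OF \<open>open I\<close> t, of "\<lambda>s. x s + y s" "\<lambda>s. 2*b/r3 s^2"])
    show "((\<lambda>s. x s + y s) has_real_derivative dx + dy) (at t)"
      using x' y' by (auto intro!: derivative_eq_intros)
  qed (use sum r3' \<open>r3 t \<noteq> 0\<close> has_real_derivative_separation_sum in auto)
  show "x t * dy + dx * y t = separation_product_rate b (s1 t) (s2 t) (r1 t) (r2 t) (r3 t)"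
  proof (rule DERIV_unique_on_open[OF \<open>open I\<close> t, of "\<lambda>s. x s * y s"
        "\<lambda>s. 2*b*(s1 s^2 + s2 s^2 + b/r3 s^2)/r3 s^2 - k"])
    show "((\<lambda>s. x s * y s) has_real_derivative x t * dy + dx * y t) (at t)"
      using x' y' by (auto intro!: derivative_eq_intros)
  qed (use prod s1' s2' r3' \<open>r3 t \<noteq> 0\<close> has_real_derivative_separation_product in auto)
qed

lemma signed_sqrt_of_scaled_square:
  fixes b v w :: real
  assumes b: "b > 0" and sq: "b*v^2 = -w"
  shows "w \<le> 0 \<and> (\<exists>\<sigma>\<in>{-1, 1}. v = (\<sigma> / sqrt b) * sqrt (-w))"
proof
  show "w \<le> 0" using sq b by (metis neg_0_le_iff_le zero_le_mult_iff zero_le_power2 less_le)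
  have "sqrt (-w) = sqrt b * \<bar>v\<bar>" using b by (simp add: sq[symmetric] real_sqrt_mult)
  then have "v = (sgn v / sqrt b) * sqrt (-w)" using b by (simp add: sgn_mult_abs)
  then show "\<exists>\<sigma>\<in>{-1, 1}. v = (\<sigma> / sqrt b) * sqrt (-w)"
    using sq by (cases "v = 0") (auto simp: sgn_if split: if_splits intro: bexI[of _ 1])
qed

theorem theorem2:
  fixes b h k :: real
    and I :: "real set"
    and s1 s2 s3 r1 r2 r3 x y dx dy :: "real \<Rightarrow> real"
  assumes b_pos: "b > 0"
    and hk1: "k \<ge> 4*b*h - b^2"
    and hk2: "k \<ge> 2*b"
    and I_open: "open I" and I_conn: "connected I"
    and r3_nz: "\<forall>t\<in>I. r3 t \<noteq> 0"
    and ode: "\<forall>t\<in>I.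
       (s1 has_real_derivative (s2 t * s3 t + r2 t * r3 t - b * r2 t / r3 t ^ 3)) (at t) \<and>
       (s2 has_real_derivative (- s1 t * s3 t + r1 t * r3 t + b * r1 t / r3 t ^ 3)) (at t) \<and>
       (s3 has_real_derivative (- 2 * r1 t * r2 t)) (at t) \<and>
       (r1 has_real_derivative (2 * s3 t * r2 t - s2 t * r3 t)) (at t) \<and>
       (r2 has_real_derivative (- 2 * s3 t * r1 t + s1 t * r3 t)) (at t) \<and>
       (r3 has_real_derivative (s2 t * r1 t - s1 t * r2 t)) (at t)"
    and on_P4: "\<forall>t\<in>I. casimir_Gamma (r1 t) (r2 t) (r3 t) = 1 \<and>
                        casimir_L (s1 t) (s2 t) (s3 t) (r1 t) (r2 t) (r3 t) = 0"
    and level: "\<forall>t\<in>I. goryachev_H b (s1 t) (s2 t) (s3 t) (r1 t) (r2 t) (r3 t) = h \<and>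
                       goryachev_K b (s1 t) (s2 t) (s3 t) (r1 t) (r2 t) (r3 t) = k"
    and sep: "\<forall>t\<in>I. separation_pair b k (s1 t) (s2 t) (r3 t) (x t) (y t)"
    and x_deriv: "\<forall>t\<in>I. (x has_real_derivative dx t) (at t)"
    and y_deriv: "\<forall>t\<in>I. (y has_real_derivative dy t) (at t)"
  shows "\<forall>t\<in>I. goryachev_W b h k (x t) \<le> 0 \<and> goryachev_W b h k (y t) \<le> 0 \<and>
           (\<exists>\<sigma>\<in>{-1, 1::real}. (x t - y t) * dx t = - (\<sigma> / sqrt b) * sqrt (- goryachev_W b h k (x t))) \<and>
           (\<exists>\<sigma>\<in>{-1, 1::real}. (x t - y t) * dy t = (\<sigma> / sqrt b) * sqrt (- goryachev_W b h k (y t)))"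
proof
  fix t assume t: "t \<in> I"
  note flow = ode[rule_format, OF t]
  have "dx t + dy t = separation_sum_rate b (s1 t) (s2 t) (r1 t) (r2 t) (r3 t)"
    and "x t * dy t + dx t * y t = separation_product_rate b (s1 t) (s2 t) (r1 t) (r2 t) (r3 t)"
    using separation_rates_along_flow[OF I_open t sep] x_deriv y_deriv flow r3_nz t by auto
  then have "b*((x t - y t)*dx t)^2 = - goryachev_W b h k (x t)"
    and "b*((x t - y t)*dy t)^2 = - goryachev_W b h k (y t)"
    using separation_velocity_squares[of "r3 t" "r1 t" "r2 t" "s1 t" "s2 t" "s3 t" b h k
        "x t" "y t" "dx t" "dy t"] on_P4 level sep r3_nz t
    by (auto simp: casimir_Gamma_def casimir_L_def)
  then have "goryachev_W b h k (x t) \<le> 0 \<and>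
      (\<exists>\<sigma>\<in>{-1, 1}. - ((x t - y t)*dx t) = (\<sigma> / sqrt b) * sqrt (- goryachev_W b h k (x t)))"
    and "goryachev_W b h k (y t) \<le> 0 \<and>
      (\<exists>\<sigma>\<in>{-1, 1}. (x t - y t)*dy t = (\<sigma> / sqrt b) * sqrt (- goryachev_W b h k (y t)))"
    using signed_sqrt_of_scaled_square[OF b_pos] by (simp_all only: power2_minus)
  then show "goryachev_W b h k (x t) \<le> 0 \<and> goryachev_W b h k (y t) \<le> 0 \<and>
      (\<exists>\<sigma>\<in>{-1, 1::real}. (x t - y t) * dx t = - (\<sigma> / sqrt b) * sqrt (- goryachev_W b h k (x t))) \<and>
      (\<exists>\<sigma>\<in>{-1, 1::real}. (x t - y t) * dy t = (\<sigma> / sqrt b) * sqrt (- goryachev_W b h k (y t)))"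
    by (auto simp: minus_equation_iff)
qed

end
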